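(* Let $\phi:\mathbb{R}^n\to[-\infty,\infty]$ be a proper nearly convex function, $\Theta\subset\mathbb{R}^n$ a nearly convex set, and $G:\mathbb{R}^n\rightrightarrows\mathbb{R}^q$ a nearly convex set-valued mapping. Suppose $$\operatorname{ri}(\operatorname{dom}\phi)\cap\operatorname{ri}(\operatorname{dom} G)\cap\operatorname{ri}\Theta\neq\emptyset\quad\text{and}\quad 0\in\operatorname{ri}\big(G(\Theta\cap\operatorname{dom}\phi)\big).$$ For $u^*\in\mathbb{R}^n$, $y^*\in\mathbb{R}^q$ let $v_G(x,y^* )=\inf\{\langle -y^*,y\rangle:y\in G(x)\}$ and $h_1(u^*,y^* )=-\phi^*(u^* )+\inf\{\langle u^*,x\rangle+v_G(x,y^* ):x\in\Theta\}$, the infimum understood as $\inf\{\langle u^*,x\rangle-\langle y^*,y\rangle:x\in\Theta,\ y\in G(x)\}$. Then $\mathcal{V}=\mathcal{V}_d$, where $\mathcal{V}=\inf\{\phi(x):x\in\Theta,\ 0\in G(x)\}$ and $\mathcal{V}_d=\sup\{h_1(u^*,y^* ):u^*\in\mathbb{R}^n,\ y^*\in\mathbb{R}^q\}$.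
   Context: A set $\Omega$ is nearly convex if there is a convex set $C$ with $C\subset\Omega\subset\overline{C}$; $\operatorname{ri}\Omega=\{a\in\Omega:\exists\delta>0,\ B(a;\delta)\cap\operatorname{aff}\Omega\subset\Omega\}$. A function is nearly convex if its epigraph is nearly convex, proper if its domain $\{\phi<\infty\}$ is nonempty and $\phi>-\infty$. Fenchel conjugate $\phi^*(u^* )=\sup_z\{\langle u^*,z\rangle-\phi(z)\}$. For $G:\mathbb{R}^n\rightrightarrows\mathbb{R}^q$: $\operatorname{dom}G=\{x:G(x)\neq\emptyset\}$, $G$ nearly convex if $\operatorname{gph}G=\{(x,y):y\in G(x)\}$ is; $G(S)=\bigcup_{x\in S}G(x)$. Convention $\inf\emptyset=\infty$. *)

theory Defs
  imports "HOL-Analysis.Analysis"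
begin

definition nearly_convex :: "'a::real_normed_vector set \<Rightarrow> bool" where
  "nearly_convex \<Omega> \<longleftrightarrow> (\<exists>C. convex C \<and> C \<subseteq> \<Omega> \<and> \<Omega> \<subseteq> closure C)"

definition ri :: "'a::euclidean_space set \<Rightarrow> 'a set" where
  "ri \<Omega> = {a \<in> \<Omega>. \<exists>\<delta>>0. ball a \<delta> \<inter> affine hull \<Omega> \<subseteq> \<Omega>}"

definition epi :: "('a \<Rightarrow> ereal) \<Rightarrow> ('a \<times> real) set" where
  "epi \<phi> = {(x, t). \<phi> x \<le> ereal t}"

definition edom :: "('a \<Rightarrow> ereal) \<Rightarrow> 'a set" where
  "edom \<phi> = {x. \<phi> x < \<infinity>}"

definition proper_fun :: "('a \<Rightarrow> ereal) \<Rightarrow> bool" where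
  "proper_fun \<phi> \<longleftrightarrow> edom \<phi> \<noteq> {} \<and> (\<forall>x. \<phi> x > -\<infinity>)"

definition nearly_convex_fun :: "('a::real_normed_vector \<Rightarrow> ereal) \<Rightarrow> bool" where
  "nearly_convex_fun \<phi> \<longleftrightarrow> nearly_convex (epi \<phi>)"

definition fconj :: "('a::real_inner \<Rightarrow> ereal) \<Rightarrow> 'a \<Rightarrow> ereal" where
  "fconj \<phi> u = (SUP z. ereal (u \<bullet> z) - \<phi> z)"

definition gph :: "('a \<Rightarrow> 'b set) \<Rightarrow> ('a \<times> 'b) set" where
  "gph G = {(x, y). y \<in> G x}"

definition sdom :: "('a \<Rightarrow> 'b set) \<Rightarrow> 'a set" where
  "sdom G = {x. G x \<noteq> {}}"

definition nearly_convex_map :: "('a::real_normed_vector \<Rightarrow> 'b::real_normed_vector set) \<Rightarrow> bool" where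
  "nearly_convex_map G \<longleftrightarrow> nearly_convex (gph G)"

definition simage :: "('a \<Rightarrow> 'b set) \<Rightarrow> 'a set \<Rightarrow> 'b set" where
  "simage G S = (\<Union>x\<in>S. G x)"

definition h1 :: "('a::real_inner \<Rightarrow> ereal) \<Rightarrow> 'a set \<Rightarrow> ('a \<Rightarrow> 'b::real_inner set)
    \<Rightarrow> 'a \<Rightarrow> 'b \<Rightarrow> ereal" where
  "h1 \<phi> \<Theta> G u y' = - fconj \<phi> u +
     (INF p \<in> {(x, y). x \<in> \<Theta> \<and> y \<in> G x}. ereal (u \<bullet> fst p - y' \<bullet> snd p))"

end

theory Submission
  imports Defs
begin

text \<open>Both sides are values of one nearly convex set \<open>K \<subseteq> (\<real>\<^sup>n \<times> \<real>\<^sup>q) \<times> \<real>\<close>, the epigraph of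
  the perturbation function: the primal value is the infimum of \<open>t\<close> over \<open>(0, t) \<in> K\<close>, and
  \<open>h\<^sub>1(u\<^sup>*, y\<^sup>*)\<close> is the infimum over \<open>K\<close> of the affine function \<open>t + \<langle>(u\<^sup>*, -y\<^sup>*), m\<rangle>\<close>. The qualification conditions, transported through the calculus of
  relative interiors of nearly convex sets (images, products, intersections), put a point \<open>(0, t\<^sub>0)\<close>
  in \<open>ri K\<close>; then \<open>(0, v)\<close>, \<open>v\<close> the primal value, lies in the relative boundary of a convex core of
  \<open>K\<close>, and a supporting hyperplane there is non-vertical and gives a dual solution.\<close>

lemma ri_eq_rel_interior: "ri \<Omega> = rel_interior \<Omega>"
  unfolding ri_def by (auto simp: mem_rel_interior_ball)

lemma ri_subset: "ri \<Omega> \<subseteq> \<Omega>"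
  unfolding ri_def by blast

lemma rel_interior_eq_of_subset_closure:
  fixes \<Omega> C :: "'a::euclidean_space set"
  assumes "convex C" "C \<subseteq> \<Omega>" "\<Omega> \<subseteq> closure C"
  shows "rel_interior \<Omega> = rel_interior C"
proof -
  have "affine hull \<Omega> = affine hull C"
    using hull_mono[OF assms(2), of affine] hull_mono[OF assms(3), of affine] by simp
  then have "rel_interior C \<subseteq> rel_interior \<Omega>" "rel_interior \<Omega> \<subseteq> rel_interior (closure C)"
    using subset_rel_interior[OF assms(2)] subset_rel_interior[OF assms(3)]
    by simp_all
  then show ?thesis
    using convex_rel_interior_closure[OF assms(1)] by blast
qed

lemma nearly_convexE:
  fixes \<Omega> :: "'a::euclidean_space set"
  assumes "nearly_convex \<Omega>"
  obtains C where "convex C" "C \<subseteq> \<Omega>" "\<Omega> \<subseteq> closure C" "ri \<Omega> = rel_interior C"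
  using assms rel_interior_eq_of_subset_closure
  unfolding nearly_convex_def ri_eq_rel_interior by blast

lemma convex_imp_nearly_convex: "convex S \<Longrightarrow> nearly_convex S"
  unfolding nearly_convex_def using closure_subset by blast

lemma nearly_convex_linear_image:
  fixes f :: "'a::euclidean_space \<Rightarrow> 'b::euclidean_space"
  assumes "linear f" "nearly_convex \<Omega>"
  shows "nearly_convex (f ` \<Omega>)" and "ri (f ` \<Omega>) = f ` ri \<Omega>"
proof -
  obtain C where C: "convex C" "C \<subseteq> \<Omega>" "\<Omega> \<subseteq> closure C" "ri \<Omega> = rel_interior C"
    using assms(2) by (rule nearly_convexE)
  have fC: "convex (f ` C)" "f ` C \<subseteq> f ` \<Omega>" "f ` \<Omega> \<subseteq> closure (f ` C)"
    using convex_linear_image[OF assms(1) C(1)] C(2,3) closure_linear_image_subset[OF assms(1), of C]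
    by auto
  then show "nearly_convex (f ` \<Omega>)"
    unfolding nearly_convex_def by blast
  show "ri (f ` \<Omega>) = f ` ri \<Omega>"
    using rel_interior_convex_linear_image[OF assms(1) C(1)] rel_interior_eq_of_subset_closure[OF fC] C(4)
    by (simp add: ri_eq_rel_interior)
qed

lemma nearly_convex_Times:
  fixes A :: "'a::euclidean_space set" and B :: "'b::euclidean_space set"
  assumes "nearly_convex A" "nearly_convex B"
  shows "nearly_convex (A \<times> B)" and "ri (A \<times> B) = ri A \<times> ri B"
proof -
  obtain C where C: "convex C" "C \<subseteq> A" "A \<subseteq> closure C" "ri A = rel_interior C"
    using assms(1) by (rule nearly_convexE)
  obtain D where D: "convex D" "D \<subseteq> B" "B \<subseteq> closure D" "ri B = rel_interior D"
    using assms(2) by (rule nearly_convexE)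
  have CD: "convex (C \<times> D)" "C \<times> D \<subseteq> A \<times> B" "A \<times> B \<subseteq> closure (C \<times> D)"
    using C D by (auto simp: convex_Times closure_Times)
  then show "nearly_convex (A \<times> B)"
    unfolding nearly_convex_def by blast
  show "ri (A \<times> B) = ri A \<times> ri B"
    using rel_interior_Times[OF C(1) D(1)] rel_interior_eq_of_subset_closure[OF CD] C(4) D(4)
    by (simp add: ri_eq_rel_interior)
qed

lemma nearly_convex_Int:
  fixes A B :: "'a::euclidean_space set"
  assumes "nearly_convex A" "nearly_convex B" "ri A \<inter> ri B \<noteq> {}"
  shows "nearly_convex (A \<inter> B)" and "ri (A \<inter> B) = ri A \<inter> ri B"
proof -
  obtain C where C: "convex C" "C \<subseteq> A" "A \<subseteq> closure C" "ri A = rel_interior C"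
    using assms(1) by (rule nearly_convexE)
  obtain D where D: "convex D" "D \<subseteq> B" "B \<subseteq> closure D" "ri B = rel_interior D"
    using assms(2) by (rule nearly_convexE)
  have meet: "rel_interior C \<inter> rel_interior D \<noteq> {}"
    using assms(3) C(4) D(4) by simp
  have CD: "convex (C \<inter> D)" "C \<inter> D \<subseteq> A \<inter> B" "A \<inter> B \<subseteq> closure (C \<inter> D)"
    using C D closure_Int_convex[OF C(1) D(1) meet] by (auto simp: convex_Int)
  then show "nearly_convex (A \<inter> B)"
    unfolding nearly_convex_def by blast
  show "ri (A \<inter> B) = ri A \<inter> ri B"
    using convex_rel_interior_inter_two[OF C(1) D(1) meet] rel_interior_eq_of_subset_closure[OF CD] C(4) D(4)
    by (simp add: ri_eq_rel_interior)
qed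

lemma INF_diff_eq_INF_epigraph:
  fixes f :: "'a \<Rightarrow> ereal"
  shows "(INF x\<in>S. f x - ereal (g x))
       = (INF p\<in>{(x, t). x \<in> S \<and> f x \<le> ereal t}. ereal (snd p - g (fst p)))"
proof (rule antisym)
  show "(INF x\<in>S. f x - ereal (g x))
      \<le> (INF p\<in>{(x, t). x \<in> S \<and> f x \<le> ereal t}. ereal (snd p - g (fst p)))"
  proof (rule INF_greatest, clarify)
    fix x t assume "x \<in> S" "f x \<le> ereal t"
    then have "(INF x\<in>S. f x - ereal (g x)) \<le> f x - ereal (g x)"
      by (intro INF_lower)
    also have "\<dots> \<le> ereal t - ereal (g x)"
      using \<open>f x \<le> ereal t\<close> order_refl by (rule ereal_minus_mono)
    finally show "(INF x\<in>S. f x - ereal (g x)) \<le> ereal (snd (x, t) - g (fst (x, t)))"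
      by simp
  qed
next
  let ?E = "{(x, t). x \<in> S \<and> f x \<le> ereal t}"
  show "(INF p\<in>?E. ereal (snd p - g (fst p))) \<le> (INF x\<in>S. f x - ereal (g x))"
  proof (rule INF_greatest)
    fix x assume x: "x \<in> S"
    show "(INF p\<in>?E. ereal (snd p - g (fst p))) \<le> f x - ereal (g x)"
    proof (cases "f x")
      case (real r)
      then show ?thesis
        using x by (intro INF_lower2[of "(x, r)"]) auto
    next
      case PInf
      then show ?thesis by simp
    next
      case MInf
      then have "(INF p\<in>?E. ereal (snd p - g (fst p))) \<le> ereal B" for B
        using x by (intro INF_lower2[of "(x, B + g x)"]) auto
      then have "(INF p\<in>?E. ereal (snd p - g (fst p))) = -\<infinity>"
        by (rule ereal_bot)
      then show ?thesis
        by simp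
    qed
  qed
qed

lemma uminus_fconj_eq_INF_epi:
  "- fconj \<phi> u = (INF p\<in>epi \<phi>. ereal (snd p - u \<bullet> fst p))"
proof -
  have "- fconj \<phi> u = (INF z. \<phi> z - ereal (u \<bullet> z))"
    unfolding fconj_def ereal_INF_uminus_eq[symmetric]
    by (intro INF_cong refl) (simp add: ereal_minus_diff_eq)
  then show ?thesis
    using INF_diff_eq_INF_epigraph[of \<phi> "\<lambda>z. u \<bullet> z" UNIV] by (simp add: epi_def)
qed

lemma INF_ereal_add_const:
  "(INF b\<in>B. ereal c + f b) = ereal c + (INF b\<in>B. f b :: ereal)"
proof (cases "B = {}")
  case False
  have neg: "ereal c + y = - (ereal (- c) + - y)" for y
    by (cases y) simp_all
  have "(INF b\<in>B. ereal c + f b) = - (SUP b\<in>B. ereal (- c) + - f b)"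
    unfolding ereal_INF_uminus_eq[symmetric] by (rule INF_cong[OF refl neg])
  also have "\<dots> = ereal c + (INF b\<in>B. f b)"
    using False by (cases "INF b\<in>B. f b") (simp_all add: SUP_ereal_add_right ereal_SUP_uminus_eq)
  finally show ?thesis .
qed (simp add: top_ereal_def)

lemma INF_Times_add:
  "(INF p\<in>A \<times> B. ereal (f (fst p) + g (snd p)))
     = (INF a\<in>A. ereal (f a)) + (INF b\<in>B. ereal (g b))"
proof -
  let ?I = "INF b\<in>B. ereal (g b)"
  have "(INF p\<in>A \<times> B. ereal (f (fst p) + g (snd p))) = (INF a\<in>A. INF b\<in>B. ereal (f a) + ereal (g b))"
    by (simp add: INF_Sigma)
  also have "\<dots> = (INF a\<in>A. ereal (f a) + ?I)"
    by (intro INF_cong refl INF_ereal_add_const)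
  also have "\<dots> = (INF a\<in>A. ereal (f a)) + ?I"
  proof (cases ?I)
    case (real r)
    then show ?thesis
      using INF_ereal_add_const[of r "\<lambda>a. ereal (f a)" A] by (simp add: add.commute)
  next
    case PInf
    then show ?thesis by (cases "A = {}") (simp_all add: top_ereal_def)
  next
    case MInf
    show ?thesis
    proof (cases "A = {}")
      case False
      then obtain a where "a \<in> A"
        by blast
      then have "(INF a\<in>A. ereal (f a)) \<noteq> \<infinity>"
        using INF_lower[of a A "\<lambda>a. ereal (f a)"] by auto
      then show ?thesis
        using MInf False by simp
    qed (simp add: top_ereal_def)
  qed
  finally show ?thesis .
qed

lemma INF_Lagrangian_le_INF_zero_fiber:
  fixes K :: "('m::real_inner \<times> real) set"
  shows "(INF q\<in>K. ereal (snd q + w \<bullet> fst q)) \<le> (INF q\<in>{q\<in>K. fst q = 0}. ereal (snd q))"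
  by (rule INF_mono) force

lemma nearly_convex_dual_multiplier:
  fixes K :: "('m::euclidean_space \<times> real) set"
  assumes "nearly_convex K"
    and up: "\<And>m t s. (m, t) \<in> K \<Longrightarrow> t \<le> s \<Longrightarrow> (m, s) \<in> K"
    and "(0, t0) \<in> ri K"
    and v: "(INF q\<in>{q\<in>K. fst q = 0}. ereal (snd q)) = ereal v"
  obtains w where "\<And>q. q \<in> K \<Longrightarrow> v \<le> snd q + w \<bullet> fst q"
proof -
  obtain C where C: "convex C" "C \<subseteq> K" "K \<subseteq> closure C" "ri K = rel_interior C"
    using assms(1) by (rule nearly_convexE)
  have v_le: "v \<le> t" if "(0, t) \<in> K" for t
    using INF_lower[of "(0, t)" "{q\<in>K. fst q = 0}" "\<lambda>q. ereal (snd q)"] that v by simp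
  have v_approx: "\<exists>t. (0, t) \<in> K \<and> v \<le> t \<and> t < v + e" if "e > 0" for e
  proof -
    have "(INF q\<in>{q\<in>K. fst q = 0}. ereal (snd q)) < ereal (v + e)"
      using v that by simp
    then obtain q where "q \<in> K" "fst q = 0" "snd q < v + e"
      by (auto simp: INF_less_iff)
    moreover have "q = (0, snd q)"
      using \<open>fst q = 0\<close> by (simp add: prod_eq_iff)
    ultimately show ?thesis
      using v_le by metis
  qed
  have v_closure: "(0, v) \<in> closure C"
  proof -
    have "\<exists>q\<in>K. dist q (0, v) < e" if "e > 0" for e
    proof -
      obtain t where "(0, t) \<in> K" "v \<le> t" "t < v + e"
        using v_approx[OF \<open>e > 0\<close>] by blast
      then show ?thesis
        by (intro bexI[of _ "(0, t)"]) (simp_all add: dist_Pair_Pair dist_real_def)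
    qed
    then have "(0, v) \<in> closure K"
      by (simp add: closure_approachable)
    then show ?thesis
      using closure_mono[OF C(3)] by auto
  qed
  have v_not_ri: "(0, v) \<notin> rel_interior C"
  proof
    assume "(0, v) \<in> rel_interior C"
    then obtain e where "e > 0" and e: "ball (0, v) e \<inter> affine hull C \<subseteq> C"
      by (auto simp: mem_rel_interior_ball)
    have "(0, v) \<in> affine hull C"
      using \<open>(0, v) \<in> rel_interior C\<close> rel_interior_subset by (blast intro: hull_inc)
    moreover obtain t where "(0, t) \<in> K" "t < v + 1"
      using v_approx[of 1] by auto
    then have "(0, v + 1) \<in> affine hull C"
      using up[of 0 t "v + 1"] C(3) closure_affine_hull by fastforce
    ultimately have "(1 + e / 2) *\<^sub>R (0, v) + (- e / 2) *\<^sub>R (0, v + 1) \<in> affine hull C"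
      by (intro mem_affine[OF affine_affine_hull]) simp_all
    moreover have "(1 + e / 2) *\<^sub>R (0, v) + (- e / 2) *\<^sub>R (0, v + 1) = (0, v - e / 2)"
      by (simp add: algebra_simps)
    moreover have "(0, v - e / 2) \<in> ball (0, v) e"
      using \<open>e > 0\<close> by (simp add: dist_Pair_Pair dist_real_def)
    ultimately have "(0, v - e / 2) \<in> K"
      using e C(2) by auto
    then show False
      using v_le[of "v - e / 2"] \<open>e > 0\<close> by simp
  qed
  obtain a where a: "\<And>q. q \<in> closure C \<Longrightarrow> a \<bullet> (0, v) \<le> a \<bullet> q"
    "\<And>q. q \<in> rel_interior C \<Longrightarrow> a \<bullet> (0, v) < a \<bullet> q"
    using supporting_hyperplane_relative_frontier[OF C(1) v_closure v_not_ri] by metis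
  have inner_a: "a \<bullet> q = fst a \<bullet> fst q + snd a * snd q" for q
    by (simp add: inner_prod_def)
  have "snd a * v < snd a * t0"
    using a(2)[of "(0, t0)"] assms(3) C(4) by (simp add: inner_a)
  moreover have "v \<le> t0"
    using v_le assms(3) ri_subset by blast
  ultimately have "snd a > 0"
    by (smt (verit) mult_left_mono_neg)
  show ?thesis
  proof
    fix q assume "q \<in> K"
    then have "snd a * v \<le> fst a \<bullet> fst q + snd a * snd q"
      using a(1)[of q] C(3) by (auto simp: inner_a)
    then have "v \<le> (fst a \<bullet> fst q) / snd a + snd q"
      using \<open>snd a > 0\<close> by (simp add: field_simps)
    then show "v \<le> snd q + (inverse (snd a) *\<^sub>R fst a) \<bullet> fst q"
      by (simp add: divide_inverse_commute)
  qed
qed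

lemma nearly_convex_zero_fiber_duality:
  fixes K :: "('m::euclidean_space \<times> real) set"
  assumes "nearly_convex K"
    and up: "\<And>m t s. (m, t) \<in> K \<Longrightarrow> t \<le> s \<Longrightarrow> (m, s) \<in> K"
    and "(0, t0) \<in> ri K"
  shows "(INF q\<in>{q\<in>K. fst q = 0}. ereal (snd q)) = (SUP w. INF q\<in>K. ereal (snd q + w \<bullet> fst q))"
    (is "?V = ?D")
proof (rule antisym)
  show "?D \<le> ?V"
    by (intro SUP_least INF_Lagrangian_le_INF_zero_fiber)
  have "(0, t0) \<in> K"
    using subsetD[OF ri_subset assms(3)] .
  then have "?V \<le> ereal t0"
    by (intro INF_lower2[of "(0, t0)"]) simp_all
  then consider "?V = -\<infinity>" | v where "?V = ereal v"
    by (cases ?V) simp_all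
  then show "?V \<le> ?D"
  proof cases
    case (2 v)
    obtain w where "\<And>q. q \<in> K \<Longrightarrow> v \<le> snd q + w \<bullet> fst q"
      using nearly_convex_dual_multiplier[OF assms(1) _ assms(3) 2] up by metis
    then have "ereal v \<le> (INF q\<in>K. ereal (snd q + w \<bullet> fst q))"
      by (intro INF_greatest) simp
    also have "\<dots> \<le> ?D"
      by (rule SUP_upper) (rule UNIV_I)
    finally show ?thesis
      using 2 by simp
  qed simp
qed

lemma edom_eq_fst_epi: "edom \<phi> = fst ` epi \<phi>"
proof (rule set_eqI)
  fix x
  have "\<phi> x < \<infinity> \<longleftrightarrow> (\<exists>t. \<phi> x \<le> ereal t)"
    by (cases "\<phi> x") auto
  then show "x \<in> edom \<phi> \<longleftrightarrow> x \<in> fst ` epi \<phi>"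
    by (force simp: edom_def epi_def)
qed

lemma sdom_eq_fst_gph: "sdom G = fst ` gph G"
  by (force simp: sdom_def gph_def)

lemma ri_simage_Int_imp_ri_gph:
  fixes G :: "'a::euclidean_space \<Rightarrow> 'b::euclidean_space set"
  assumes "nearly_convex \<Theta>" "nearly_convex D" "nearly_convex_map G"
    and "ri D \<inter> ri (sdom G) \<inter> ri \<Theta> \<noteq> {}"
    and "y \<in> ri (simage G (\<Theta> \<inter> D))"
  obtains x where "(x, y) \<in> ri (gph G)" "x \<in> ri \<Theta>" "x \<in> ri D"
proof -
  have gph: "nearly_convex (gph G)"
    using assms(3) by (simp add: nearly_convex_map_def)
  have "ri (sdom G) = fst ` ri (gph G)"
    unfolding sdom_eq_fst_gph by (rule nearly_convex_linear_image(2)[OF linear_fst gph])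
  then obtain x0 y0 where x0: "(x0, y0) \<in> ri (gph G)" "x0 \<in> ri \<Theta>" "x0 \<in> ri D"
    using assms(4) by force
  have \<Theta>D: "nearly_convex (\<Theta> \<inter> D)" "ri (\<Theta> \<inter> D) = ri \<Theta> \<inter> ri D"
    using nearly_convex_Int[OF assms(1,2)] x0 by blast+
  have \<Theta>DU: "nearly_convex ((\<Theta> \<inter> D) \<times> (UNIV :: 'b set))"
    "ri ((\<Theta> \<inter> D) \<times> (UNIV :: 'b set)) = (ri \<Theta> \<inter> ri D) \<times> UNIV"
    using nearly_convex_Times[OF \<Theta>D(1) convex_imp_nearly_convex[OF convex_UNIV]] \<Theta>D(2)
    by (simp_all add: ri_eq_rel_interior[of UNIV])
  have "ri (gph G) \<inter> ri ((\<Theta> \<inter> D) \<times> UNIV) \<noteq> {}"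
    using x0 \<Theta>DU(2) by blast
  then have \<Lambda>: "nearly_convex (gph G \<inter> (\<Theta> \<inter> D) \<times> UNIV)"
    "ri (gph G \<inter> (\<Theta> \<inter> D) \<times> UNIV) = ri (gph G) \<inter> (ri \<Theta> \<inter> ri D) \<times> UNIV"
    using nearly_convex_Int[OF gph \<Theta>DU(1)] \<Theta>DU(2) by simp_all
  have "simage G (\<Theta> \<inter> D) = snd ` (gph G \<inter> (\<Theta> \<inter> D) \<times> UNIV)"
    by (force simp: simage_def gph_def)
  then have "ri (simage G (\<Theta> \<inter> D)) = snd ` (ri (gph G) \<inter> (ri \<Theta> \<inter> ri D) \<times> UNIV)"
    using nearly_convex_linear_image(2)[OF linear_snd \<Lambda>(1)] \<Lambda>(2) by simp
  then show ?thesis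
    using assms(5) that by force
qed

text \<open>Up to its boundary, the epigraph of the perturbation function
  \<open>(m\<^sub>1, m\<^sub>2) \<mapsto> inf {\<phi> (x - m\<^sub>1) | x \<in> \<Theta>, m\<^sub>2 \<in> G x}\<close>.\<close>
definition perturbation_epi ::
    "('a::real_vector \<Rightarrow> ereal) \<Rightarrow> 'a set \<Rightarrow> ('a \<Rightarrow> 'b set) \<Rightarrow> (('a \<times> 'b) \<times> real) set" where
  "perturbation_epi \<phi> \<Theta> G = {((x - z, y), t) | z t x y. \<phi> z \<le> ereal t \<and> x \<in> \<Theta> \<and> y \<in> G x}"

definition perturbation_map :: "('a::real_vector \<times> real) \<times> ('a \<times> 'b) \<Rightarrow> ('a \<times> 'b) \<times> real" where
  "perturbation_map p = ((fst (snd p) - fst (fst p), snd (snd p)), snd (fst p))"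

lemma linear_perturbation_map: "linear perturbation_map"
  unfolding linear_iff perturbation_map_def by (auto simp: algebra_simps)

lemma perturbation_epi_eq_image:
  "perturbation_epi \<phi> \<Theta> G = perturbation_map ` (epi \<phi> \<times> {(x, y). x \<in> \<Theta> \<and> y \<in> G x})"
proof
  show "perturbation_epi \<phi> \<Theta> G \<subseteq> perturbation_map ` (epi \<phi> \<times> {(x, y). x \<in> \<Theta> \<and> y \<in> G x})"
  proof
    fix q assume "q \<in> perturbation_epi \<phi> \<Theta> G"
    then obtain z t x y where "q = ((x - z, y), t)" "\<phi> z \<le> ereal t" "x \<in> \<Theta>" "y \<in> G x"
      unfolding perturbation_epi_def by blast
    then show "q \<in> perturbation_map ` (epi \<phi> \<times> {(x, y). x \<in> \<Theta> \<and> y \<in> G x})"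
      by (intro image_eqI[of _ _ "((z, t), (x, y))"]) (simp_all add: perturbation_map_def epi_def)
  qed
next
  show "perturbation_map ` (epi \<phi> \<times> {(x, y). x \<in> \<Theta> \<and> y \<in> G x}) \<subseteq> perturbation_epi \<phi> \<Theta> G"
  proof (clarsimp simp: perturbation_map_def epi_def)
    fix z t x y assume "\<phi> z \<le> ereal t" "x \<in> \<Theta>" "y \<in> G x"
    then show "((x - z, y), t) \<in> perturbation_epi \<phi> \<Theta> G"
      unfolding perturbation_epi_def by blast
  qed
qed

lemma perturbation_epi_upward:
  "(m, t) \<in> perturbation_epi \<phi> \<Theta> G \<Longrightarrow> t \<le> s \<Longrightarrow> (m, s) \<in> perturbation_epi \<phi> \<Theta> G"
  unfolding perturbation_epi_def by (blast intro: order_trans ereal_less_eq(3)[THEN iffD2])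

lemma INF_feasible_eq_INF_zero_fiber:
  fixes \<phi> :: "'a::real_vector \<Rightarrow> ereal" and G :: "'a \<Rightarrow> 'b::real_vector set"
  shows "(INF x\<in>{x\<in>\<Theta>. 0 \<in> G x}. \<phi> x)
     = (INF q\<in>{q\<in>perturbation_epi \<phi> \<Theta> G. fst q = 0}. ereal (snd q))"
proof -
  have "{q\<in>perturbation_epi \<phi> \<Theta> G. fst q = 0}
      = (\<lambda>p. (0 :: 'a \<times> 'b, snd p)) ` {(x, t). x \<in> {x\<in>\<Theta>. 0 \<in> G x} \<and> \<phi> x \<le> ereal t}"
  proof (intro equalityI subsetI)
    fix q assume "q \<in> {q\<in>perturbation_epi \<phi> \<Theta> G. fst q = 0}"
    then obtain z t x y where q: "q = ((x - z, y), t)" "\<phi> z \<le> ereal t" "x \<in> \<Theta>" "y \<in> G x"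
      and "(x - z, y) = 0"
      unfolding perturbation_epi_def by auto
    then have "x = z" "y = 0"
      by (simp_all add: zero_prod_def)
    with q show "q \<in> (\<lambda>p. (0 :: 'a \<times> 'b, snd p)) ` {(x, t). x \<in> {x\<in>\<Theta>. 0 \<in> G x} \<and> \<phi> x \<le> ereal t}"
      by (intro image_eqI[of _ _ "(x, t)"]) (simp_all add: zero_prod_def)
  next
    fix q assume "q \<in> (\<lambda>p. (0 :: 'a \<times> 'b, snd p)) ` {(x, t). x \<in> {x\<in>\<Theta>. 0 \<in> G x} \<and> \<phi> x \<le> ereal t}"
    then obtain x t where "q = ((x - x, 0), t)" "x \<in> \<Theta>" "0 \<in> G x" "\<phi> x \<le> ereal t"
      by (auto simp: zero_prod_def)
    then show "q \<in> {q\<in>perturbation_epi \<phi> \<Theta> G. fst q = 0}"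
      unfolding perturbation_epi_def by (auto simp: zero_prod_def)
  qed
  then show ?thesis
    using INF_diff_eq_INF_epigraph[of \<phi> "\<lambda>_. 0" "{x\<in>\<Theta>. 0 \<in> G x}"] by (simp add: image_comp o_def)
qed

lemma h1_eq_INF_perturbation_epi:
  "h1 \<phi> \<Theta> G u y' = (INF q\<in>perturbation_epi \<phi> \<Theta> G. ereal (snd q + (u, - y') \<bullet> fst q))"
proof -
  let ?S = "{(x, y). x \<in> \<Theta> \<and> y \<in> G x}"
  have "(INF q\<in>perturbation_epi \<phi> \<Theta> G. ereal (snd q + (u, - y') \<bullet> fst q))
      = (INF p\<in>epi \<phi> \<times> ?S. ereal ((snd (fst p) - u \<bullet> fst (fst p)) + (u \<bullet> fst (snd p) - y' \<bullet> snd (snd p))))"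
    unfolding perturbation_epi_eq_image image_comp
    by (intro INF_cong refl) (simp add: perturbation_map_def inner_diff_right)
  also have "\<dots> = (INF p\<in>epi \<phi>. ereal (snd p - u \<bullet> fst p)) + (INF p\<in>?S. ereal (u \<bullet> fst p - y' \<bullet> snd p))"
    by (rule INF_Times_add)
  also have "\<dots> = h1 \<phi> \<Theta> G u y'"
    unfolding h1_def uminus_fconj_eq_INF_epi ..
  finally show ?thesis ..
qed

lemma SUP_h1_eq_SUP_Lagrangian:
  fixes \<phi> :: "'a::real_inner \<Rightarrow> ereal" and G :: "'a \<Rightarrow> 'b::real_inner set"
  shows "(SUP p\<in>UNIV. h1 \<phi> \<Theta> G (fst p) (snd p))
     = (SUP w. INF q\<in>perturbation_epi \<phi> \<Theta> G. ereal (snd q + w \<bullet> fst q))"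
proof -
  let ?L = "\<lambda>w. INF q\<in>perturbation_epi \<phi> \<Theta> G. ereal (snd q + w \<bullet> fst q)"
  let ?r = "\<lambda>p::'a \<times> 'b. (fst p, - snd p)"
  have "surj ?r"
    by (rule surjI[of _ ?r]) simp
  have "(SUP p\<in>UNIV. h1 \<phi> \<Theta> G (fst p) (snd p)) = (SUP w\<in>range ?r. ?L w)"
    by (simp add: h1_eq_INF_perturbation_epi image_comp)
  also have "\<dots> = (SUP w. ?L w)"
    using \<open>surj ?r\<close> by simp
  finally show ?thesis .
qed

lemma nearly_convex_perturbation_epi:
  fixes G :: "'a::euclidean_space \<Rightarrow> 'b::euclidean_space set"
  assumes "nearly_convex_fun \<phi>" "nearly_convex \<Theta>" "nearly_convex_map G"
    and "(x, t) \<in> ri (epi \<phi>)" "x \<in> ri \<Theta>" "(x, 0) \<in> ri (gph G)"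
  shows "nearly_convex (perturbation_epi \<phi> \<Theta> G)" and "(0, t) \<in> ri (perturbation_epi \<phi> \<Theta> G)"
proof -
  have S: "{(x, y). x \<in> \<Theta> \<and> y \<in> G x} = gph G \<inter> \<Theta> \<times> UNIV"
    by (auto simp: gph_def)
  have \<Theta>U: "nearly_convex (\<Theta> \<times> (UNIV :: 'b set))" "ri (\<Theta> \<times> (UNIV :: 'b set)) = ri \<Theta> \<times> UNIV"
    using nearly_convex_Times[OF assms(2) convex_imp_nearly_convex[OF convex_UNIV]]
    by (simp_all add: ri_eq_rel_interior[of UNIV])
  have "ri (gph G) \<inter> ri (\<Theta> \<times> UNIV) \<noteq> {}"
    using assms(5,6) \<Theta>U(2) by blast
  then have gph\<Theta>: "nearly_convex (gph G \<inter> \<Theta> \<times> UNIV)"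
    "ri (gph G \<inter> \<Theta> \<times> UNIV) = ri (gph G) \<inter> ri \<Theta> \<times> UNIV"
    using nearly_convex_Int[OF assms(3)[unfolded nearly_convex_map_def] \<Theta>U(1)] \<Theta>U(2) by simp_all
  have epi: "nearly_convex (epi \<phi>)"
    using assms(1) by (simp add: nearly_convex_fun_def)
  note prod = nearly_convex_Times[OF epi gph\<Theta>(1)]
  show "nearly_convex (perturbation_epi \<phi> \<Theta> G)"
    unfolding perturbation_epi_eq_image S
    by (rule nearly_convex_linear_image(1)[OF linear_perturbation_map prod(1)])
  have "((x, t), (x, 0)) \<in> ri (epi \<phi> \<times> (gph G \<inter> \<Theta> \<times> UNIV))"
    using assms(4-6) prod(2) gph\<Theta>(2) by simp
  then show "(0, t) \<in> ri (perturbation_epi \<phi> \<Theta> G)"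
    unfolding perturbation_epi_eq_image S nearly_convex_linear_image(2)[OF linear_perturbation_map prod(1)]
    by (intro image_eqI[of "(0, t)" perturbation_map "((x, t), (x, 0))"])
      (simp_all add: perturbation_map_def zero_prod_def)
qed

theorem theorem7p6:
  fixes \<phi> :: "'a::euclidean_space \<Rightarrow> ereal"
    and \<Theta> :: "'a set"
    and G :: "'a \<Rightarrow> 'b::euclidean_space set"
  assumes "proper_fun \<phi>" and "nearly_convex_fun \<phi>"
    and "nearly_convex \<Theta>" and "nearly_convex_map G"
    and "ri (edom \<phi>) \<inter> ri (sdom G) \<inter> ri \<Theta> \<noteq> {}"
    and "0 \<in> ri (simage G (\<Theta> \<inter> edom \<phi>))"
  shows "(INF x \<in> {x \<in> \<Theta>. 0 \<in> G x}. \<phi> x) = (SUP p \<in> UNIV. h1 \<phi> \<Theta> G (fst p) (snd p))"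
proof -
  have epi: "nearly_convex (epi \<phi>)"
    using assms(2) by (simp add: nearly_convex_fun_def)
  note edom = nearly_convex_linear_image[OF linear_fst epi, folded edom_eq_fst_epi]
  obtain x where x: "(x, 0) \<in> ri (gph G)" "x \<in> ri \<Theta>" "x \<in> ri (edom \<phi>)"
    using assms(3) edom(1) assms(4-6) by (rule ri_simage_Int_imp_ri_gph)
  then obtain t where "(x, t) \<in> ri (epi \<phi>)"
    using edom(2) by force
  note K = nearly_convex_perturbation_epi[OF assms(2-4) this x(2,1)]
  show ?thesis
    unfolding INF_feasible_eq_INF_zero_fiber SUP_h1_eq_SUP_Lagrangian
    using nearly_convex_zero_fiber_duality[OF K(1) _ K(2)] perturbation_epi_upward by blast
qed

end
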